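(* In the setting described in the context, let $g\in\mathcal{G}$ with $\int A\circ g\,d\mu<\infty$, and let $g_\star\nu=P_\sharp\big((g_\sharp\mu)_A\big)$ be the normalized measure associated with the invariant measure $g_\sharp\mu$. Then $$g_\star\nu=(P\circ g)_\sharp\,\mu_C,\qquad C=A\circ g.$$
   Context: Let $(\mathcal{X},\Sigma)$ be a measurable space, $\Phi^t$ a flow on $\mathcal{X}$ (bijective measurable maps, $\Phi^{t_1}\circ\Phi^{t_2}=\Phi^{t_1+t_2}$, jointly measurable), $f_\sharp$ push-forward, $\mu$ an invariant probability measure ($\Phi^t_\sharp\mu=\mu$ for all $t$). Let $h^a$, $a>0$, be bijective measurable maps and $\mathcal{G}$ a group of bijective measurable maps of $\mathcal{X}$ with $h^{a_1}\circ h^{a_2}=h^{a_1a_2}$, $\Phi^t\circ g=g\circ\Phi^t$, $g\circ h^a=h^a\circ g$, $\Phi^t\circ h^a=h^a\circ\Phi^{t/a}$ for all $a,a_1,a_2>0$, $t$, $g\in\mathcal{G}$. $\mathcal{Y}\subset\mathcal{X}$ is a representative set: for every $x$ there is a unique $a=A(x)>0$ with $h^a(x)\in\mathcal{Y}$, $A$ measurable with $\int A\,d\mu<\infty$; $P(x)=h^{A(x)}(x)$. For a measure $\rho$ and positive measurable $B$ with $0<\int B\,d\rho<\infty$, $\rho_B$ is the probability measure with $d\rho_B/d\rho=B/\int B\,d\rho$. $\nu=P_\sharp\mu_A$. *)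

theory Defs
  imports "HOL-Probability.Probability"
begin

definition push :: "('a \<Rightarrow> 'a) \<Rightarrow> 'a measure \<Rightarrow> 'a measure" where
  "push f \<rho> = distr \<rho> \<rho> f"

definition normalized :: "'a measure \<Rightarrow> ('a \<Rightarrow> real) \<Rightarrow> 'a measure" where
  "normalized \<rho> B = density \<rho> (\<lambda>x. ennreal (B x) / (\<integral>\<^sup>+ y. ennreal (B y) \<partial>\<rho>))"

definition bimeas :: "'a measure \<Rightarrow> ('a \<Rightarrow> 'a) \<Rightarrow> bool" where
  "bimeas M f \<longleftrightarrow> f \<in> measurable M M \<and> bij_betw f (space M) (space M)"

end

theory Submission
  imports Defs
begin

text \<open>Reweighting commutes with pushing forward along a measurable map: since
  \<open>\<integral> A d(g\<^sub>\<sharp>\<mu>) = \<integral> A \<circ> g d\<mu>\<close>, the measure \<open>(g\<^sub>\<sharp>\<mu>)\<^sub>A\<close> is \<open>g\<^sub>\<sharp>(\<mu>\<^sub>C)\<close>, and then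
  \<open>P\<^sub>\<sharp> g\<^sub>\<sharp> = (P \<circ> g)\<^sub>\<sharp>\<close>. The only subtlety is that \<open>P\<close> is not assumed measurable, so the
  composition rule for push-forwards must come from \<open>g\<close> being a measurable bijection
  with measurable inverse.\<close>

lemma normalized_distr:
  assumes g: "g \<in> measurable M N" and B: "B \<in> borel_measurable N"
  shows "normalized (distr M N g) B = distr (normalized M (B \<circ> g)) N g"
proof -
  have "(\<integral>\<^sup>+ y. ennreal (B y) \<partial>distr M N g) = (\<integral>\<^sup>+ x. ennreal (B (g x)) \<partial>M)"
    using g B by (simp add: nn_integral_distr)
  then show ?thesis
    unfolding normalized_def using g B by (simp add: density_distr)
qed

lemma vimage_sets_measurable_inverse:
  assumes g': "g' \<in> measurable N M" and inv: "\<And>y. y \<in> space N \<Longrightarrow> g (g' y) = y"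
    and S: "S \<subseteq> space N" and pre: "g -` S \<inter> space M \<in> sets M"
  shows "S \<in> sets N"
proof -
  have "g' -` (g -` S \<inter> space M) \<inter> space N = S"
    using S inv measurable_space[OF g'] by auto
  with measurable_sets[OF g' pre] show ?thesis by simp
qed

text \<open>Unlike \<open>distr_distr\<close>, the outer map \<open>f\<close> need not be measurable: the sets whose
  \<open>f\<close>-preimage is not measurable contribute \<open>0\<close> on both sides.\<close>

lemma distr_distr_measurable_inverse:
  assumes g: "g \<in> measurable M N" and g': "g' \<in> measurable N M"
    and inv: "\<And>y. y \<in> space N \<Longrightarrow> g (g' y) = y"
  shows "distr (distr M N g) L f = distr M L (f \<circ> g)"
proof -
  have "emeasure (distr M N g) (f -` X \<inter> space N) = emeasure M ((f \<circ> g) -` X \<inter> space M)" for X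
  proof -
    let ?S = "f -` X \<inter> space N"
    have vimage_comp: "g -` ?S \<inter> space M = (f \<circ> g) -` X \<inter> space M"
      using measurable_space[OF g] by auto
    show ?thesis
    proof (cases "?S \<in> sets N")
      case True
      then show ?thesis by (simp only: emeasure_distr[OF g True] vimage_comp)
    next
      case False
      have "(f \<circ> g) -` X \<inter> space M \<notin> sets M"
      proof
        assume "(f \<circ> g) -` X \<inter> space M \<in> sets M"
        then have "g -` ?S \<inter> space M \<in> sets M"
          by (simp only: vimage_comp)
        then have "?S \<in> sets N"
          using vimage_sets_measurable_inverse[OF g' inv, of ?S] by blast
        with False show False ..
      qed
      then have "emeasure M ((f \<circ> g) -` X \<inter> space M) = 0"
        by (rule emeasure_notin_sets)
      moreover have "emeasure (distr M N g) ?S = 0"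
        using False by (simp add: emeasure_notin_sets)
      ultimately show ?thesis by simp
    qed
  qed
  then have "(\<lambda>X. emeasure (distr M N g) (f -` X \<inter> space N)) = (\<lambda>X. emeasure M ((f \<circ> g) -` X \<inter> space M))"
    by (rule ext)
  then show ?thesis
    by (simp only: distr_def[of "distr M N g" L f] space_distr distr_def[of M L])
qed

theorem proposition4:
  fixes \<mu> :: "'a measure"
    and \<Phi> :: "real \<Rightarrow> 'a \<Rightarrow> 'a"
    and h :: "real \<Rightarrow> 'a \<Rightarrow> 'a"
    and \<G> :: "('a \<Rightarrow> 'a) set"
    and Y :: "'a set"
    and A :: "'a \<Rightarrow> real"
    and P :: "'a \<Rightarrow> 'a"
    and g :: "'a \<Rightarrow> 'a"
  assumes prob: "prob_space \<mu>"
    \<comment> \<open>flow\<close>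
    and flow_bimeas: "\<And>t. bimeas \<mu> (\<Phi> t)"
    and flow_comp: "\<And>t1 t2 x. x \<in> space \<mu> \<Longrightarrow> \<Phi> t1 (\<Phi> t2 x) = \<Phi> (t1 + t2) x"
    and flow_joint: "(\<lambda>(t, x). \<Phi> t x) \<in> measurable (borel \<Otimes>\<^sub>M \<mu>) \<mu>"
    and invariant: "\<And>t. push (\<Phi> t) \<mu> = \<mu>"
    \<comment> \<open>scalings h^a\<close>
    and h_bimeas: "\<And>a. a > 0 \<Longrightarrow> bimeas \<mu> (h a)"
    and h_comp: "\<And>a1 a2 x. a1 > 0 \<Longrightarrow> a2 > 0 \<Longrightarrow> x \<in> space \<mu> \<Longrightarrow> h a1 (h a2 x) = h (a1 * a2) x"
    \<comment> \<open>the group G\<close>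
    and G_bimeas: "\<And>f. f \<in> \<G> \<Longrightarrow> bimeas \<mu> f"
    and G_id: "id \<in> \<G>"
    and G_comp: "\<And>f1 f2. f1 \<in> \<G> \<Longrightarrow> f2 \<in> \<G> \<Longrightarrow> f1 \<circ> f2 \<in> \<G>"
    and G_inv: "\<And>f. f \<in> \<G> \<Longrightarrow> \<exists>f'\<in>\<G>. \<forall>x\<in>space \<mu>. f' (f x) = x \<and> f (f' x) = x"
    \<comment> \<open>commutation relations\<close>
    and flow_G: "\<And>t f x. f \<in> \<G> \<Longrightarrow> x \<in> space \<mu> \<Longrightarrow> \<Phi> t (f x) = f (\<Phi> t x)"
    and G_h: "\<And>f a x. f \<in> \<G> \<Longrightarrow> a > 0 \<Longrightarrow> x \<in> space \<mu> \<Longrightarrow> f (h a x) = h a (f x)"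
    and flow_h: "\<And>t a x. a > 0 \<Longrightarrow> x \<in> space \<mu> \<Longrightarrow> \<Phi> t (h a x) = h a (\<Phi> (t / a) x)"
    \<comment> \<open>representative set Y, the function A, and the projection P\<close>
    and Y_sub: "Y \<subseteq> space \<mu>"
    and Y_rep: "\<And>x. x \<in> space \<mu> \<Longrightarrow> \<exists>!a. a > 0 \<and> h a x \<in> Y"
    and A_pos: "\<And>x. x \<in> space \<mu> \<Longrightarrow> A x > 0"
    and A_rep: "\<And>x. x \<in> space \<mu> \<Longrightarrow> h (A x) x \<in> Y"
    and A_meas: "A \<in> borel_measurable \<mu>"
    and A_int: "(\<integral>\<^sup>+ x. ennreal (A x) \<partial>\<mu>) < \<infinity>"
    and P_def: "\<And>x. P x = h (A x) x"
    \<comment> \<open>the hypotheses on g\<close>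
    and g_G: "g \<in> \<G>"
    and Ag_int: "(\<integral>\<^sup>+ x. ennreal (A (g x)) \<partial>\<mu>) < \<infinity>"
  shows "push P (normalized (push g \<mu>) A) = push (P \<circ> g) (normalized \<mu> (A \<circ> g))"
proof -
  obtain g' where g'_G: "g' \<in> \<G>" and g_g': "\<And>x. x \<in> space \<mu> \<Longrightarrow> g (g' x) = x"
    using G_inv[OF g_G] by blast
  have g: "g \<in> measurable \<mu> \<mu>" and g': "g' \<in> measurable \<mu> \<mu>"
    using G_bimeas[OF g_G] G_bimeas[OF g'_G] by (simp_all add: bimeas_def)
  define \<mu>\<^sub>C where "\<mu>\<^sub>C = normalized \<mu> (A \<circ> g)"
  have sets_\<mu>\<^sub>C: "sets \<mu>\<^sub>C = sets \<mu>"
    by (simp add: \<mu>\<^sub>C_def normalized_def)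
  have g_\<mu>\<^sub>C: "g \<in> measurable \<mu>\<^sub>C \<mu>"
    using g unfolding measurable_cong_sets[OF sets_\<mu>\<^sub>C refl] .
  have g'_\<mu>\<^sub>C: "g' \<in> measurable \<mu> \<mu>\<^sub>C"
    using g' unfolding measurable_cong_sets[OF refl sets_\<mu>\<^sub>C] .
  have "push P (normalized (push g \<mu>) A) = distr (distr \<mu>\<^sub>C \<mu> g) (distr \<mu>\<^sub>C \<mu> g) P"
    using normalized_distr[OF g A_meas] by (simp add: push_def \<mu>\<^sub>C_def)
  also have "\<dots> = distr \<mu>\<^sub>C (distr \<mu>\<^sub>C \<mu> g) (P \<circ> g)"
    using distr_distr_measurable_inverse[OF g_\<mu>\<^sub>C g'_\<mu>\<^sub>C] g_g' by simp
  also have "\<dots> = push (P \<circ> g) \<mu>\<^sub>C"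
    unfolding push_def by (rule distr_cong) (simp_all add: sets_\<mu>\<^sub>C)
  finally show ?thesis by (simp add: \<mu>\<^sub>C_def)
qed

end
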